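(* Let $A = (a_{ij}) \in \mathbb{R}^{p \times n}$, let $1 \leq k \leq p$, and let $\widetilde{x} \in \{0,1\}^n$. Let $P \subseteq \{1, \ldots, p\}$ be a subset with $|P| \geq k$ such that $Q_k(A\widetilde{x}) = \min_{i \in P} \sum_{j=1}^n a_{ij}\widetilde{x}_j$. Then for all $x \in \{0,1\}^n$, $$Q_k(Ax) \geq Q_k(A\widetilde{x}) + \sum_{j : \widetilde{x}_j = 1} (x_j - 1)\max_{i \in P} a_{ij} + \sum_{j : \widetilde{x}_j = 0} x_j \min_{i \in P} a_{ij},$$ and this inequality holds with equality for $x = \widetilde{x}$.
   Context: For $y \in \mathbb{R}^p$ and an integer $1 \leq k \leq p$, $Q_k(y)$ denotes the $k$-th largest entry of $y$ (entries counted with multiplicity). *)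

theory Defs
  imports "HOL-Analysis.Analysis"
begin

text \<open>Vectors in R^p are modelled as functions nat => real on indices 0..p-1
  (paper index i corresponds to i-1).\<close>
definition Qk :: "nat \<Rightarrow> nat \<Rightarrow> (nat \<Rightarrow> real) \<Rightarrow> real" where
  "Qk p k y = rev (sort (map y [0..<p])) ! (k - 1)"

definition matvec :: "nat \<Rightarrow> (nat \<Rightarrow> nat \<Rightarrow> real) \<Rightarrow> (nat \<Rightarrow> real) \<Rightarrow> nat \<Rightarrow> real" where
  "matvec n A x = (\<lambda>i. \<Sum>j<n. A i j * x j)"

end

theory Submission
  imports Defs
begin

text \<open>Every row i \<in> P is bounded below by the right-hand side: write
  (A x)_i = (A xt)_i + sum_j a_ij (x_j - xt_j), bound a_ij by its maximum over P where
  x_j - xt_j \<le> 0 and by its minimum over P where x_j - xt_j \<ge> 0, and use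
  (A xt)_i \<ge> min over P = Q_k(A xt). As P contains at least k rows, all of them at least
  the bound, so is the k-th largest entry of A x.\<close>

lemma sorted_nth_ge_if_length_filter_ge:
  fixes L :: "'a::linorder list"
  assumes sorted: "sorted L" and "1 \<le> k"
    and many: "k \<le> length (filter (\<lambda>v. c \<le> v) L)"
  shows "c \<le> L ! (length L - k)"
proof (rule ccontr)
  assume "\<not> c \<le> L ! (length L - k)"
  have k_le: "k \<le> length L" using many length_filter_le order_trans by blast
  have "length (filter (\<lambda>v. c \<le> v) L) = card {m. m < length L \<and> c \<le> L ! m}"
    by (rule length_filter_conv_card)
  also have "\<dots> \<le> card {length L - k + 1..<length L}"
  proof (rule card_mono[OF finite_atLeastLessThan], rule subsetI)
    fix m assume m: "m \<in> {m. m < length L \<and> c \<le> L ! m}"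
    have "\<not> m \<le> length L - k"
    proof
      assume "m \<le> length L - k"
      then have "L ! m \<le> L ! (length L - k)"
        using sorted_nth_mono[OF sorted] k_le \<open>1 \<le> k\<close> by simp
      then show False using m \<open>\<not> c \<le> L ! (length L - k)\<close> by auto
    qed
    then show "m \<in> {length L - k + 1..<length L}" using m by auto
  qed
  also have "\<dots> = k - 1" using k_le \<open>1 \<le> k\<close> by simp
  finally show False using many \<open>1 \<le> k\<close> by simp
qed

lemma Qk_eq_nth_sort:
  assumes "1 \<le> k" and "k \<le> p"
  shows "Qk p k y = sort (map y [0..<p]) ! (p - k)"
  using assms by (simp add: Qk_def rev_nth)

lemma Qk_ge_if_card_ge:
  assumes "1 \<le> k" and many: "k \<le> card {i. i < p \<and> c \<le> y i}"
  shows "c \<le> Qk p k y"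
proof -
  let ?L = "sort (map y [0..<p])"
  have "card {i. i < p \<and> c \<le> y i} = length (filter (\<lambda>i. c \<le> y i) [0..<p])"
    by (subst distinct_card[symmetric]) (auto intro: arg_cong[where f = card])
  also have "\<dots> = length (filter (\<lambda>v. c \<le> v) ?L)"
    by (simp add: filter_sort comp_def)
  finally have count: "k \<le> length (filter (\<lambda>v. c \<le> v) ?L)" using many by simp
  have "card {i. i < p \<and> c \<le> y i} \<le> card {..<p}" by (rule card_mono) auto
  then have "k \<le> p" using many by simp
  then show ?thesis
    using sorted_nth_ge_if_length_filter_ge[OF sorted_sort \<open>1 \<le> k\<close> count]
    by (simp add: Qk_eq_nth_sort[OF \<open>1 \<le> k\<close>])
qed

lemma Qk_ge_if_subset_ge:
  assumes "1 \<le> k" and "P \<subseteq> {..<p}" and "k \<le> card P" and "\<forall>i\<in>P. c \<le> y i"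
  shows "c \<le> Qk p k y"
proof (rule Qk_ge_if_card_ge[OF \<open>1 \<le> k\<close>])
  have "card P \<le> card {i. i < p \<and> c \<le> y i}"
    by (rule card_mono) (use assms in auto)
  then show "k \<le> card {i. i < p \<and> c \<le> y i}" using \<open>k \<le> card P\<close> by simp
qed

lemma sum_mult_ge_binary_linearization:
  fixes a lo hi x xt :: "nat \<Rightarrow> real"
  assumes xt: "\<forall>j<n. xt j \<in> {0, 1}" and x: "\<forall>j<n. 0 \<le> x j \<and> x j \<le> 1"
    and a: "\<forall>j<n. lo j \<le> a j \<and> a j \<le> hi j"
  shows "(\<Sum>j<n. a j * xt j)
           + (\<Sum>j\<in>{j. j < n \<and> xt j = 1}. (x j - 1) * hi j)
           + (\<Sum>j\<in>{j. j < n \<and> xt j = 0}. x j * lo j)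
         \<le> (\<Sum>j<n. a j * x j)"
proof -
  define S1 where "S1 = {j. j < n \<and> xt j = 1}"
  define S0 where "S0 = {j. j < n \<and> xt j = 0}"
  have split: "(\<Sum>j<n. f j) = (\<Sum>j\<in>S1. f j) + (\<Sum>j\<in>S0. f j)" for f :: "nat \<Rightarrow> real"
  proof -
    have "{..<n} = S1 \<union> S0" using xt by (auto simp: S1_def S0_def)
    moreover have "finite S1" "finite S0" "S1 \<inter> S0 = {}" by (auto simp: S1_def S0_def)
    ultimately show ?thesis by (simp add: sum.union_disjoint)
  qed
  have "(\<Sum>j\<in>S1. (x j - 1) * hi j) \<le> (\<Sum>j\<in>S1. (x j - 1) * a j)"
  proof (rule sum_mono)
    fix j assume "j \<in> S1"
    then have "a j \<le> hi j" and "x j - 1 \<le> 0" using x a by (auto simp: S1_def)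
    then show "(x j - 1) * hi j \<le> (x j - 1) * a j" by (rule mult_left_mono_neg)
  qed
  moreover have "(\<Sum>j\<in>S0. x j * lo j) \<le> (\<Sum>j\<in>S0. x j * a j)"
  proof (rule sum_mono)
    fix j assume "j \<in> S0"
    then have "lo j \<le> a j" and "0 \<le> x j" using x a by (auto simp: S0_def)
    then show "x j * lo j \<le> x j * a j" by (rule mult_left_mono)
  qed
  moreover have "(\<Sum>j<n. a j * x j)
      = (\<Sum>j\<in>S1. a j) + (\<Sum>j\<in>S1. (x j - 1) * a j) + (\<Sum>j\<in>S0. x j * a j)"
    by (simp add: split algebra_simps sum.distrib sum_subtractf)
  moreover have "(\<Sum>j<n. a j * xt j) = (\<Sum>j\<in>S1. a j)"
    by (simp add: split S1_def S0_def)
  ultimately show ?thesis unfolding S1_def[symmetric] S0_def[symmetric] by linarith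
qed

theorem theorem8:
  fixes p n k :: nat and A :: "nat \<Rightarrow> nat \<Rightarrow> real"
    and xt :: "nat \<Rightarrow> real" and P :: "nat set"
  assumes "1 \<le> k" and "k \<le> p"
    and "\<forall>j<n. xt j \<in> {0, 1}"
    and "P \<subseteq> {..<p}" and "card P \<ge> k"
    and "Qk p k (matvec n A xt) = (MIN i\<in>P. \<Sum>j<n. A i j * xt j)"
  shows "(\<forall>x. (\<forall>j<n. x j \<in> {0, 1}) \<longrightarrow>
           Qk p k (matvec n A x) \<ge> Qk p k (matvec n A xt)
             + (\<Sum>j\<in>{j. j < n \<and> xt j = 1}. (x j - 1) * (MAX i\<in>P. A i j))
             + (\<Sum>j\<in>{j. j < n \<and> xt j = 0}. x j * (MIN i\<in>P. A i j)))
       \<and> Qk p k (matvec n A xt) = Qk p k (matvec n A xt)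
             + (\<Sum>j\<in>{j. j < n \<and> xt j = 1}. (xt j - 1) * (MAX i\<in>P. A i j))
             + (\<Sum>j\<in>{j. j < n \<and> xt j = 0}. xt j * (MIN i\<in>P. A i j))"
proof (intro conjI allI impI)
  have "finite P" using assms(4) finite_subset by blast
  fix x :: "nat \<Rightarrow> real" assume x: "\<forall>j<n. x j \<in> {0, 1}"
  show "Qk p k (matvec n A x) \<ge> Qk p k (matvec n A xt)
          + (\<Sum>j\<in>{j. j < n \<and> xt j = 1}. (x j - 1) * (MAX i\<in>P. A i j))
          + (\<Sum>j\<in>{j. j < n \<and> xt j = 0}. x j * (MIN i\<in>P. A i j))"
  proof (rule Qk_ge_if_subset_ge[OF assms(1,4,5)], intro ballI)
    fix i assume "i \<in> P"
    have "Qk p k (matvec n A xt) \<le> (\<Sum>j<n. A i j * xt j)"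
      using assms(6) \<open>finite P\<close> \<open>i \<in> P\<close> by simp
    moreover have "(\<Sum>j<n. A i j * xt j)
          + (\<Sum>j\<in>{j. j < n \<and> xt j = 1}. (x j - 1) * (MAX i\<in>P. A i j))
          + (\<Sum>j\<in>{j. j < n \<and> xt j = 0}. x j * (MIN i\<in>P. A i j))
        \<le> matvec n A x i"
      unfolding matvec_def
      by (rule sum_mult_ge_binary_linearization) (use assms(3) x \<open>finite P\<close> \<open>i \<in> P\<close> in auto)
    ultimately show "Qk p k (matvec n A xt)
          + (\<Sum>j\<in>{j. j < n \<and> xt j = 1}. (x j - 1) * (MAX i\<in>P. A i j))
          + (\<Sum>j\<in>{j. j < n \<and> xt j = 0}. x j * (MIN i\<in>P. A i j))
        \<le> matvec n A x i"
      by linarith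
  qed
qed simp

end
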